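(* Let $n\ge3$, let $R^1,\dots,R^n$ be independent variables and let $c^i=c^i(R^i)$ be given functions with $c^i\ne c^j$ for $i\ne j$. Consider the Lagrangian 2-form in the $n+1$ unknown functions $u,\mu^1,\dots,\mu^n$ of $R$: $$\mathcal{L}=\sum_{i<j}L_{ij}\,\mathrm{d}R^i\wedge\mathrm{d}R^j,\qquad L_{ij}=\mu^j_iu_j-\mu^i_ju_i+\frac{(\mu^j-\mu^i)^2}{c^j-c^i}u_iu_j.$$ Then the full system of multiform Euler-Lagrange equations of $\mathcal{L}$ (with respect to variations of $u$ and of each $\mu^i$) is equivalent to the following: (i) for each $j$ the quantity $P_j:=\mu^i_j+\frac{(\mu^i-\mu^j)^2}{c^i-c^j}u_j$ is independent of the choice of $i\ne j$; (ii) $\partial P_i/\partial R^j=\partial P_j/\partial R^i$ for all $i\neq j$; (iii) $u_{ij}=2\frac{\mu^j-\mu^i}{c^j-c^i}u_iu_j$ for all $i\ne j$. Equivalently (locally), there exists a function $P(R)$ such that for all $i\ne j$ $$\mu^i_j=\frac{(\mu^j-\mu^i)^2}{c^j-c^i}u_j+\frac{\partial P}{\partial R^j},\qquad u_{ij}=2\frac{\mu^j-\mu^i}{c^j-c^i}u_iu_j,$$ and the substitution $\tilde\mu^i=\mu^i-P$ transforms this into the system $\tilde\mu^i_j=\frac{(\tilde\mu^j-\tilde\mu^i)^2}{c^j-c^i}u_j$, $u_{ij}=2\frac{\tilde\mu^j-\tilde\mu^i}{c^j-c^i}u_iu_j$.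
   Context: Lower indices denote partial derivatives with respect to the $R$ variables: $u_i=\partial u/\partial R^i$, $\mu^i_j=\partial\mu^i/\partial R^j$, $u_{ij}=\partial^2u/\partial R^i\partial R^j$. $L_{ij}$ is antisymmetric in $i,j$. Multiform Euler-Lagrange equations for several fields $w\in\{u,\mu^1,\dots,\mu^n\}$ are, for all pairwise distinct $i,j,k$: $\frac{\delta_{ij}L_{ij}}{\delta w}=0$, $\frac{\delta_{ij}L_{ij}}{\delta w_j}-\frac{\delta_{ik}L_{ik}}{\delta w_k}=0$, $\frac{\partial L_{ij}}{\partial w_{ij}}+\frac{\partial L_{jk}}{\partial w_{jk}}+\frac{\partial L_{ki}}{\partial w_{ki}}=0$, together with $\frac{\delta_{ij}L_{ij}}{\delta w_k}=0$ ($k\neq i,j$), $\frac{\partial L_{ij}}{\partial w_{k\ell}}=0$ ($k,\ell\ne i,j$), $\frac{\partial L_{ij}}{\partial w_{j\ell}}-\frac{\partial L_{ik}}{\partial w_{k\ell}}=0$ ($\ell\ne i$), where $\frac{\delta_{ij}}{\delta w}=\frac{\partial}{\partial w}-\partial_i\frac{\partial}{\partial w_i}-\partial_j\frac{\partial}{\partial w_j}+\partial_i\partial_j\frac{\partial}{\partial w_{ij}}$, $\frac{\delta_{ij}}{\delta w_j}=\frac{\partial}{\partial w_j}-\partial_i\frac{\partial}{\partial w_{ij}}$, $\frac{\delta_{ij}}{\delta w_k}=\frac{\partial}{\partial w_k}-\partial_i\frac{\partial}{\partial w_{ik}}-\partial_j\frac{\partial}{\partial w_{jk}}$, $\partial_i$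 the total derivative in $R^i$. *)

theory Defs
  imports "HOL-Analysis.Analysis"
begin

text \<open>Points R = (R^1,...,R^n) are vectors of type real^'n, the index type 'n being a
finite type with n = CARD('n) elements.  Fields are indexed by 'n option:
None is u, Some i is mu^i.\<close>

definition pd :: "'n::finite \<Rightarrow> (real^'n \<Rightarrow> real) \<Rightarrow> real^'n \<Rightarrow> real" where
  "pd k f R = deriv (\<lambda>t. f (R + t *\<^sub>R axis k 1)) 0"

definition smooth_on :: "(real^'n::finite) set \<Rightarrow> (real^'n \<Rightarrow> real) \<Rightarrow> bool" where
  "smooth_on U f \<longleftrightarrow> (\<forall>ks :: 'n list. \<forall>R\<in>U. foldr pd ks f differentiable (at R))"

text \<open>Second-order jet coordinates: values w, first derivatives w_k, second derivatives
w_kl (one coordinate for each ordered pair (k,l)).\<close>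
type_synonym 'n jet =
  "('n option \<Rightarrow> real) \<times> ('n option \<Rightarrow> 'n \<Rightarrow> real) \<times> ('n option \<Rightarrow> 'n \<Rightarrow> 'n \<Rightarrow> real)"

definition jv :: "'n jet \<Rightarrow> 'n option \<Rightarrow> real" where "jv J = fst J"
definition jd1 :: "'n jet \<Rightarrow> 'n option \<Rightarrow> 'n \<Rightarrow> real" where "jd1 J = fst (snd J)"
definition jd2 :: "'n jet \<Rightarrow> 'n option \<Rightarrow> 'n \<Rightarrow> 'n \<Rightarrow> real" where "jd2 J = snd (snd J)"

definition dval :: "'n option \<Rightarrow> (real^'n \<Rightarrow> 'n jet \<Rightarrow> real) \<Rightarrow> real^'n \<Rightarrow> 'n jet \<Rightarrow> real" where
  "dval a F R J = deriv (\<lambda>t. F R ((jv J)(a := t), jd1 J, jd2 J)) (jv J a)"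

definition dd1 :: "'n option \<Rightarrow> 'n \<Rightarrow> (real^'n \<Rightarrow> 'n jet \<Rightarrow> real) \<Rightarrow> real^'n \<Rightarrow> 'n jet \<Rightarrow> real" where
  "dd1 a k F R J = deriv (\<lambda>t. F R (jv J, (jd1 J)(a := (jd1 J a)(k := t)), jd2 J)) (jd1 J a k)"

definition dd2 :: "'n option \<Rightarrow> 'n \<Rightarrow> 'n \<Rightarrow> (real^'n \<Rightarrow> 'n jet \<Rightarrow> real) \<Rightarrow> real^'n \<Rightarrow> 'n jet \<Rightarrow> real" where
  "dd2 a k l F R J =
     deriv (\<lambda>t. F R (jv J, jd1 J, (jd2 J)(a := (jd2 J a)(k := (jd2 J a k)(l := t))))) (jd2 J a k l)"

definition jetw :: "('n::finite option \<Rightarrow> real^'n \<Rightarrow> real) \<Rightarrow> real^'n \<Rightarrow> 'n jet" where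
  "jetw w R = ((\<lambda>a. w a R), (\<lambda>a k. pd k (w a) R), (\<lambda>a k l. pd k (pd l (w a)) R))"

definition ev :: "('n::finite option \<Rightarrow> real^'n \<Rightarrow> real) \<Rightarrow> (real^'n \<Rightarrow> 'n jet \<Rightarrow> real) \<Rightarrow> real^'n \<Rightarrow> real" where
  "ev w F R = F R (jetw w R)"

definition flds :: "(real^'n \<Rightarrow> real) \<Rightarrow> ('n \<Rightarrow> real^'n \<Rightarrow> real) \<Rightarrow> 'n option \<Rightarrow> real^'n \<Rightarrow> real" where
  "flds u mu a = (case a of None \<Rightarrow> u | Some i \<Rightarrow> mu i)"

text \<open>Variational derivatives (evaluated on the field w, at R); total derivatives
are partial derivatives of the evaluated expressions.\<close>
definition var0 where
  "var0 L i j w a R =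
     ev w (dval a (L i j)) R
     - pd i (ev w (dd1 a i (L i j))) R
     - pd j (ev w (dd1 a j (L i j))) R
     + pd i (pd j (ev w (dd2 a i j (L i j)))) R"

definition varj where
  "varj L i j w a R = ev w (dd1 a j (L i j)) R - pd i (ev w (dd2 a i j (L i j))) R"

definition vark where  \<comment> \<open>delta_ij / delta w_k, k \<noteq> i,j\<close>
  "vark L i j k w a R =
     ev w (dd1 a k (L i j)) R - pd i (ev w (dd2 a i k (L i j))) R - pd j (ev w (dd2 a j k (L i j))) R"

definition multiform_EL ::
  "('n::finite \<Rightarrow> 'n \<Rightarrow> real^'n \<Rightarrow> 'n jet \<Rightarrow> real) \<Rightarrow> ('n option \<Rightarrow> real^'n \<Rightarrow> real) \<Rightarrow> real^'n \<Rightarrow> bool" where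
  "multiform_EL L w R \<longleftrightarrow>
    (\<forall>a i j k. i \<noteq> j \<and> j \<noteq> k \<and> i \<noteq> k \<longrightarrow>
       var0 L i j w a R = 0
     \<and> varj L i j w a R - varj L i k w a R = 0
     \<and> ev w (dd2 a i j (L i j)) R + ev w (dd2 a j k (L j k)) R + ev w (dd2 a k i (L k i)) R = 0
     \<and> vark L i j k w a R = 0
     \<and> (\<forall>l. l \<noteq> i \<and> l \<noteq> j \<longrightarrow> ev w (dd2 a k l (L i j)) R = 0)
     \<and> (\<forall>l. l \<noteq> i \<longrightarrow> ev w (dd2 a j l (L i j)) R - ev w (dd2 a k l (L i k)) R = 0))"

text \<open>The Lagrangian coefficients
 L_ij = mu^j_i u_j - mu^i_j u_i + (mu^j - mu^i)^2/(c^j - c^i) u_i u_j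
(antisymmetric in i,j, so one formula serves all ordered pairs).\<close>
definition Lag :: "('n::finite \<Rightarrow> real \<Rightarrow> real) \<Rightarrow> 'n \<Rightarrow> 'n \<Rightarrow> real^'n \<Rightarrow> 'n jet \<Rightarrow> real" where
  "Lag c i j R J =
     jd1 J (Some j) i * jd1 J None j - jd1 J (Some i) j * jd1 J None i
     + (jv J (Some j) - jv J (Some i))^2 / (c j (R$j) - c i (R$i)) * jd1 J None i * jd1 J None j"

definition Pf :: "('n::finite \<Rightarrow> real \<Rightarrow> real) \<Rightarrow> (real^'n \<Rightarrow> real) \<Rightarrow> ('n \<Rightarrow> real^'n \<Rightarrow> real)
    \<Rightarrow> 'n \<Rightarrow> 'n \<Rightarrow> real^'n \<Rightarrow> real" where
  "Pf c u mu i j R = pd j (mu i) R + (mu i R - mu j R)^2 / (c i (R$i) - c j (R$j)) * pd j u R"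

end

theory Submission
  imports Defs
begin

text \<open>The Lagrangian contains no second derivatives and is affine in the derivatives of the
  mu^i, so its multiform Euler-Lagrange equations reduce to the variational equations of each
  L_ij and to the corner equations.  Varying mu^i or mu^j gives the equation for u_ij; varying u
  gives d_i P_j = d_j P_i, with P_j computed from the pair (i, j), and the corner equation for u
  says that P_j does not depend on the auxiliary index (as n >= 3, every pair has a third index).
  Thus (i) and (ii) say that P_1 dR^1 + ... + P_n dR^n is a well-defined closed 1-form.  By the
  Poincare lemma on balls it is locally exact; conversely a local potential makes it closed by
  the symmetry of mixed partial derivatives, proved with the mean value theorem on small squares.\<close>

lemma has_real_derivative_along_line:
  fixes f :: "real^'n::finite \<Rightarrow> real"
  assumes "(f has_derivative D) (at (y0 + x *\<^sub>R e))"
  shows "((\<lambda>t. f (y0 + t *\<^sub>R e)) has_real_derivative D e) (at x)"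
proof -
  have "((\<lambda>t. y0 + t *\<^sub>R e) has_derivative (\<lambda>h. h *\<^sub>R e)) (at x)"
    by (auto intro!: derivative_eq_intros)
  from has_derivative_compose[OF this assms]
  have "((\<lambda>t. f (y0 + t *\<^sub>R e)) has_derivative (\<lambda>h. D (h *\<^sub>R e))) (at x)"
    by (simp add: o_def)
  moreover have "(\<lambda>h. D (h *\<^sub>R e)) = (*) (D e)"
    using has_derivative_linear[OF assms] by (auto simp: linear_scale mult.commute)
  ultimately show ?thesis
    by (simp add: has_field_derivative_def)
qed

lemma pd_eq_derivative:
  assumes "(f has_derivative D) (at R)"
  shows "pd k f R = D (axis k 1)"
  unfolding pd_def
  by (rule DERIV_imp_deriv, rule has_real_derivative_along_line) (use assms in simp)

lemma has_real_derivative_pd_line: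
  fixes f :: "real^'n::finite \<Rightarrow> real"
  assumes "f differentiable (at (y0 + x *\<^sub>R axis k 1))"
  shows "((\<lambda>t. f (y0 + t *\<^sub>R axis k 1)) has_real_derivative pd k f (y0 + x *\<^sub>R axis k 1)) (at x)"
proof -
  obtain D where D: "(f has_derivative D) (at (y0 + x *\<^sub>R axis k 1))"
    using assms differentiable_def by blast
  show ?thesis
    using has_real_derivative_along_line[OF D] pd_eq_derivative[OF D] by simp
qed

lemma has_real_derivative_pd:
  fixes f :: "real^'n::finite \<Rightarrow> real"
  assumes "f differentiable (at R)"
  shows "((\<lambda>t. f (R + t *\<^sub>R axis k 1)) has_real_derivative pd k f R) (at 0)"
  using has_real_derivative_pd_line[of f R 0 k] assms by simp

lemma pd_eqI:
  fixes f :: "real^'n::finite \<Rightarrow> real"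
  assumes "((\<lambda>t. f (R + t *\<^sub>R axis k 1)) has_real_derivative D) (at 0)"
  shows "pd k f R = D"
  unfolding pd_def using assms by (rule DERIV_imp_deriv)

lemma pd_cong_open:
  fixes f g :: "real^'n::finite \<Rightarrow> real"
  assumes "open V" "R \<in> V" "\<And>x. x \<in> V \<Longrightarrow> f x = g x"
  shows "pd k f R = pd k g R"
proof -
  have "open ((\<lambda>t::real. R + t *\<^sub>R axis k 1) -` V)"
    by (rule open_vimage[OF assms(1)]) (intro continuous_intros)
  hence "eventually (\<lambda>t. R + t *\<^sub>R axis k 1 \<in> V) (nhds (0::real))"
    unfolding eventually_nhds using assms(2)
    by (intro exI[of _ "(\<lambda>t::real. R + t *\<^sub>R axis k 1) -` V"]) auto
  hence "eventually (\<lambda>t. f (R + t *\<^sub>R axis k 1) = g (R + t *\<^sub>R axis k 1)) (nhds (0::real))"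
    by (rule eventually_mono) (use assms(3) in auto)
  from DERIV_cong_ev[OF refl this refl] show ?thesis
    unfolding pd_def deriv_def by simp
qed

lemma has_derivative_pd_sum:
  fixes f :: "real^'n::finite \<Rightarrow> real"
  assumes "f differentiable (at R)"
  shows "(f has_derivative (\<lambda>h. \<Sum>j\<in>UNIV. h$j * pd j f R)) (at R)"
proof -
  obtain D where D: "(f has_derivative D) (at R)"
    using assms differentiable_def by blast
  have "D h = (\<Sum>j\<in>UNIV. h$j * pd j f R)" for h
  proof -
    have "h = (\<Sum>j\<in>UNIV. h$j *\<^sub>R axis j 1)"
      by (simp add: vec_eq_iff axis_def if_distrib cong: if_cong)
    hence "D h = D (\<Sum>j\<in>UNIV. h$j *\<^sub>R axis j 1)"
      by simp
    also have "\<dots> = (\<Sum>j\<in>UNIV. h$j * D (axis j 1))"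
      using has_derivative_linear[OF D] by (simp add: linear_sum linear_scale)
    finally show ?thesis
      using pd_eq_derivative[OF D] by simp
  qed
  thus ?thesis
    using D by (metis (no_types, lifting) ext)
qed

lemma pd_const [simp]: "pd k (\<lambda>x. a) = (\<lambda>R. 0)"
  unfolding pd_def by (simp add: fun_eq_iff)

lemma pd_minus:
  fixes f :: "real^'n::finite \<Rightarrow> real"
  assumes "f differentiable (at R)"
  shows "pd k (\<lambda>x. - f x) R = - pd k f R"
  by (rule pd_eqI) (use has_real_derivative_pd[OF assms] in \<open>auto intro!: derivative_eq_intros\<close>)

lemma pd_add:
  fixes f g :: "real^'n::finite \<Rightarrow> real"
  assumes "f differentiable (at R)" "g differentiable (at R)"
  shows "pd k (\<lambda>x. f x + g x) R = pd k f R + pd k g R"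
  by (rule pd_eqI)
    (use has_real_derivative_pd[OF assms(1)] has_real_derivative_pd[OF assms(2)]
      in \<open>auto intro!: derivative_eq_intros\<close>)

lemma pd_diff:
  fixes f g :: "real^'n::finite \<Rightarrow> real"
  assumes "f differentiable (at R)" "g differentiable (at R)"
  shows "pd k (\<lambda>x. f x - g x) R = pd k f R - pd k g R"
  by (rule pd_eqI)
    (use has_real_derivative_pd[OF assms(1)] has_real_derivative_pd[OF assms(2)]
      in \<open>auto intro!: derivative_eq_intros\<close>)

lemma pd_mult:
  fixes f g :: "real^'n::finite \<Rightarrow> real"
  assumes "f differentiable (at R)" "g differentiable (at R)"
  shows "pd k (\<lambda>x. f x * g x) R = pd k f R * g R + f R * pd k g R"
  by (rule pd_eqI)
    (use has_real_derivative_pd[OF assms(1)] has_real_derivative_pd[OF assms(2)]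
      in \<open>auto intro!: derivative_eq_intros\<close>)

lemma pd_inverse:
  fixes f :: "real^'n::finite \<Rightarrow> real"
  assumes "f differentiable (at R)" "f R \<noteq> 0"
  shows "pd k (\<lambda>x. inverse (f x)) R = - (pd k f R * inverse (f R) * inverse (f R))"
  by (rule pd_eqI)
    (use has_real_derivative_pd[OF assms(1)] assms(2)
      in \<open>auto intro!: derivative_eq_intros simp: power2_eq_square\<close>)

section \<open>Smooth functions\<close>

lemma smooth_on_imp_differentiable:
  "smooth_on U f \<Longrightarrow> R \<in> U \<Longrightarrow> f differentiable (at R)"
  unfolding smooth_on_def by (metis foldr_Nil id_apply)

lemma smooth_on_pd: "smooth_on U f \<Longrightarrow> smooth_on U (pd k f)"
  unfolding smooth_on_def
proof (intro allI ballI)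
  fix ks R assume "\<forall>ks. \<forall>R\<in>U. foldr pd ks f differentiable (at R)" "R \<in> U"
  hence "foldr pd (ks @ [k]) f differentiable (at R)" by blast
  thus "foldr pd ks (pd k f) differentiable (at R)" by simp
qed

lemma smooth_on_imp_continuous_pd:
  "smooth_on U f \<Longrightarrow> R \<in> U \<Longrightarrow> continuous (at R) (pd k f)"
  using differentiable_imp_continuous_within smooth_on_imp_differentiable smooth_on_pd by blast

text \<open>Every partial derivative of a member of the closure agrees on U with another member,
  so all members are smooth.\<close>

inductive_set smooth_closure :: "(real^'n::finite) set \<Rightarrow> (real^'n \<Rightarrow> real) set" for U where
  smooth: "smooth_on U f \<Longrightarrow> f \<in> smooth_closure U"
| const: "(\<lambda>x. a) \<in> smooth_closure U"
| add: "f \<in> smooth_closure U \<Longrightarrow> g \<in> smooth_closure U \<Longrightarrow> (\<lambda>x. f x + g x) \<in> smooth_closure U"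
| mult: "f \<in> smooth_closure U \<Longrightarrow> g \<in> smooth_closure U \<Longrightarrow> (\<lambda>x. f x * g x) \<in> smooth_closure U"
| inverse: "f \<in> smooth_closure U \<Longrightarrow> \<forall>x\<in>U. f x \<noteq> 0 \<Longrightarrow> (\<lambda>x. inverse (f x)) \<in> smooth_closure U"

lemma smooth_closure_differentiable:
  "f \<in> smooth_closure U \<Longrightarrow> R \<in> U \<Longrightarrow> f differentiable (at R)"
proof (induction rule: smooth_closure.induct)
  case (smooth f)
  then show ?case by (rule smooth_on_imp_differentiable)
next
  case (inverse f)
  then show ?case by (intro differentiable_inverse) auto
qed (auto intro: differentiable_add differentiable_mult)

lemma smooth_closure_pd:
  assumes "f \<in> smooth_closure U"
  shows "\<exists>g\<in>smooth_closure U. \<forall>R\<in>U. pd k f R = g R"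
  using assms
proof induction
  case (smooth f)
  then show ?case using smooth_on_pd smooth_closure.smooth by blast
next
  case (const a)
  show ?case by (intro bexI[of _ "\<lambda>x. 0"]) (auto intro: smooth_closure.const)
next
  case (add f g)
  then obtain f' g' where "f' \<in> smooth_closure U" "\<forall>R\<in>U. pd k f R = f' R"
    "g' \<in> smooth_closure U" "\<forall>R\<in>U. pd k g R = g' R" by blast
  with add show ?case
    by (intro bexI[of _ "\<lambda>x. f' x + g' x"])
      (auto simp: pd_add smooth_closure_differentiable intro: smooth_closure.add)
next
  case (mult f g)
  then obtain f' g' where "f' \<in> smooth_closure U" "\<forall>R\<in>U. pd k f R = f' R"
    "g' \<in> smooth_closure U" "\<forall>R\<in>U. pd k g R = g' R" by blast
  with mult show ?case
    by (intro bexI[of _ "\<lambda>x. f' x * g x + f x * g' x"])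
      (auto simp: pd_mult smooth_closure_differentiable intro: smooth_closure.add smooth_closure.mult)
next
  case (inverse f)
  then obtain f' where f': "f' \<in> smooth_closure U" "\<forall>R\<in>U. pd k f R = f' R" by blast
  have inv: "(\<lambda>x. inverse (f x)) \<in> smooth_closure U"
    using inverse.hyps by (rule smooth_closure.inverse)
  have mem: "(\<lambda>x. (- 1) * (f' x * inverse (f x) * inverse (f x))) \<in> smooth_closure U"
    by (intro smooth_closure.mult smooth_closure.const f'(1) inv)
  have "\<forall>R\<in>U. pd k (\<lambda>x. inverse (f x)) R = (- 1) * (f' R * inverse (f R) * inverse (f R))"
    using inverse f' by (auto simp: pd_inverse smooth_closure_differentiable)
  then show ?case by (intro bexI[OF _ mem]) simp
qed

lemma smooth_closure_imp_smooth_on: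
  assumes "open U" "f \<in> smooth_closure U"
  shows "smooth_on U f"
proof -
  have ex: "\<exists>g\<in>smooth_closure U. \<forall>R\<in>U. foldr pd ks f R = g R" for ks
  proof (induction ks)
    case Nil
    then show ?case using assms by auto
  next
    case (Cons k ks)
    then obtain g where g: "g \<in> smooth_closure U" "\<forall>R\<in>U. foldr pd ks f R = g R" by blast
    obtain g' where "g' \<in> smooth_closure U" "\<forall>R\<in>U. pd k g R = g' R"
      using smooth_closure_pd[OF g(1)] by blast
    moreover have "\<forall>R\<in>U. pd k (foldr pd ks f) R = pd k g R"
      using pd_cong_open[OF assms(1)] g(2) by blast
    ultimately show ?case by auto
  qed
  show ?thesis
    unfolding smooth_on_def
  proof (intro allI ballI)
    fix ks R assume "R \<in> U"
    obtain g where g: "g \<in> smooth_closure U" "\<forall>R\<in>U. foldr pd ks f R = g R"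
      using ex by blast
    then obtain D where "(g has_derivative D) (at R)"
      using smooth_closure_differentiable \<open>R \<in> U\<close> differentiable_def by blast
    hence "(foldr pd ks f has_derivative D) (at R)"
      by (rule has_derivative_transform_within_open[OF _ assms(1) \<open>R \<in> U\<close>]) (use g in auto)
    thus "foldr pd ks f differentiable (at R)"
      unfolding differentiable_def by blast
  qed
qed

lemma smooth_on_add:
  "open U \<Longrightarrow> smooth_on U f \<Longrightarrow> smooth_on U g \<Longrightarrow> smooth_on U (\<lambda>x. f x + g x)"
  by (rule smooth_closure_imp_smooth_on) (auto intro: smooth_closure.intros)

lemma smooth_on_mult:
  "open U \<Longrightarrow> smooth_on U f \<Longrightarrow> smooth_on U g \<Longrightarrow> smooth_on U (\<lambda>x. f x * g x)"
  by (rule smooth_closure_imp_smooth_on) (auto intro: smooth_closure.intros)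

lemma smooth_on_inverse:
  "open U \<Longrightarrow> smooth_on U f \<Longrightarrow> \<forall>x\<in>U. f x \<noteq> 0 \<Longrightarrow> smooth_on U (\<lambda>x. inverse (f x))"
  by (rule smooth_closure_imp_smooth_on) (auto intro: smooth_closure.intros)

lemma smooth_on_const: "open U \<Longrightarrow> smooth_on U (\<lambda>x. a)"
  by (rule smooth_closure_imp_smooth_on) (auto intro: smooth_closure.intros)

lemma smooth_on_diff:
  "open U \<Longrightarrow> smooth_on U f \<Longrightarrow> smooth_on U g \<Longrightarrow> smooth_on U (\<lambda>x. f x - g x)"
proof -
  assume U: "open U" and f: "smooth_on U f" and g: "smooth_on U g"
  have "smooth_on U (\<lambda>x. f x + (- 1) * g x)"
    by (rule smooth_on_add[OF U f smooth_on_mult[OF U smooth_on_const[OF U] g]])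
  then show ?thesis by simp
qed

section \<open>Symmetry of mixed partial derivatives\<close>

lemma mixed_difference_mvt:
  fixes P Fi :: "real^'n::finite \<Rightarrow> real"
  assumes s: "s > 0"
    and box: "\<And>a b. 0 \<le> a \<Longrightarrow> a \<le> s \<Longrightarrow> 0 \<le> b \<Longrightarrow> b \<le> s \<Longrightarrow>
      R + a *\<^sub>R axis i 1 + b *\<^sub>R axis j 1 \<in> V"
    and dP: "\<And>x. x \<in> V \<Longrightarrow> P differentiable (at x)"
    and pdP: "\<And>x. x \<in> V \<Longrightarrow> pd i P x = Fi x"
    and dFi: "\<And>x. x \<in> V \<Longrightarrow> Fi differentiable (at x)"
  shows "\<exists>a b. 0 \<le> a \<and> a \<le> s \<and> 0 \<le> b \<and> b \<le> s \<and>
     P (R + s *\<^sub>R axis i 1 + s *\<^sub>R axis j 1) - P (R + s *\<^sub>R axis i 1) - P (R + s *\<^sub>R axis j 1) + P R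
       = s\<^sup>2 * pd j Fi (R + a *\<^sub>R axis i 1 + b *\<^sub>R axis j 1)"
proof -
  define ei where "ei = (axis i 1 :: real^'n)"
  define ej where "ej = (axis j 1 :: real^'n)"
  define g where "g x = P ((R + s *\<^sub>R ej) + x *\<^sub>R ei) - P (R + x *\<^sub>R ei)" for x
  have "DERIV g x :> Fi ((R + s *\<^sub>R ej) + x *\<^sub>R ei) - Fi (R + x *\<^sub>R ei)" if "0 \<le> x" "x \<le> s" for x
  proof -
    have m1: "(R + s *\<^sub>R ej) + x *\<^sub>R ei \<in> V"
      using box[OF that s[THEN less_imp_le] order_refl] unfolding ei_def ej_def by (simp add: algebra_simps)
    have m2: "R + x *\<^sub>R ei \<in> V"
      using box[of x 0] that s unfolding ei_def ej_def by simp
    show ?thesis unfolding g_def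
      using has_real_derivative_pd_line[OF dP[OF m1[unfolded ei_def]]]
        has_real_derivative_pd_line[OF dP[OF m2[unfolded ei_def]]]
        pdP[OF m1] pdP[OF m2] unfolding ei_def
      by (auto intro!: derivative_eq_intros)
  qed
  from MVT2[OF s this]
  obtain \<xi> where \<xi>: "0 < \<xi>" "\<xi> < s"
    "g s - g 0 = s * (Fi ((R + s *\<^sub>R ej) + \<xi> *\<^sub>R ei) - Fi (R + \<xi> *\<^sub>R ei))" by auto
  define h where "h y = Fi ((R + \<xi> *\<^sub>R ei) + y *\<^sub>R ej)" for y
  have "DERIV h y :> pd j Fi ((R + \<xi> *\<^sub>R ei) + y *\<^sub>R ej)" if "0 \<le> y" "y \<le> s" for y
  proof -
    have "(R + \<xi> *\<^sub>R ei) + y *\<^sub>R ej \<in> V"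
      using box[of \<xi> y] \<xi> that unfolding ei_def ej_def by simp
    thus ?thesis
      unfolding h_def ej_def using has_real_derivative_pd_line dFi by blast
  qed
  from MVT2[OF s this]
  obtain \<eta> where \<eta>: "0 < \<eta>" "\<eta> < s"
    "h s - h 0 = s * pd j Fi ((R + \<xi> *\<^sub>R ei) + \<eta> *\<^sub>R ej)" by auto
  have "h s = Fi ((R + s *\<^sub>R ej) + \<xi> *\<^sub>R ei)" "h 0 = Fi (R + \<xi> *\<^sub>R ei)"
    unfolding h_def by (simp_all add: algebra_simps)
  hence "g s - g 0 = s\<^sup>2 * pd j Fi ((R + \<xi> *\<^sub>R ei) + \<eta> *\<^sub>R ej)"
    using \<xi>(3) \<eta>(3) by (simp add: power2_eq_square)
  moreover have "g s - g 0 = P (R + s *\<^sub>R ei + s *\<^sub>R ej) - P (R + s *\<^sub>R ei) - P (R + s *\<^sub>R ej) + P R"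
    unfolding g_def by (simp add: algebra_simps)
  ultimately show ?thesis
    using \<xi> \<eta> unfolding ei_def ej_def by (intro exI[of _ \<xi>] exI[of _ \<eta>]) auto
qed

text \<open>Both mixed derivatives equal the same second difference quotient of P over a small
  square at R, up to evaluation at (different) points of that square.\<close>

lemma mixed_pd_meet_nearby:
  fixes P Fi Fj :: "real^'n::finite \<Rightarrow> real"
  assumes V: "open V" "R \<in> V"
    and dP: "\<And>x. x \<in> V \<Longrightarrow> P differentiable (at x)"
    and pi: "\<And>x. x \<in> V \<Longrightarrow> pd i P x = Fi x"
    and pj: "\<And>x. x \<in> V \<Longrightarrow> pd j P x = Fj x"
    and dFi: "\<And>x. x \<in> V \<Longrightarrow> Fi differentiable (at x)"
    and dFj: "\<And>x. x \<in> V \<Longrightarrow> Fj differentiable (at x)"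
    and e: "e > 0"
  shows "\<exists>x y. dist x R < e \<and> dist y R < e \<and> pd j Fi x = pd i Fj y"
proof -
  obtain r where r: "r > 0" "ball R r \<subseteq> V"
    using V open_contains_ball by blast
  define s where "s = min e r / 3"
  have s: "s > 0" using e r unfolding s_def by simp
  have near: "dist (R + a *\<^sub>R axis k 1 + b *\<^sub>R axis l 1) R < min e r"
    if "0 \<le> a" "a \<le> s" "0 \<le> b" "b \<le> s" for a b k l
  proof -
    have "dist (R + a *\<^sub>R axis k 1 + b *\<^sub>R axis l 1) R = norm (a *\<^sub>R axis k (1::real) + b *\<^sub>R axis l 1 :: real^'n)"
      by (simp add: dist_norm)
    also have "\<dots> \<le> \<bar>a\<bar> + \<bar>b\<bar>"
      by (rule order_trans[OF norm_triangle_ineq]) simp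
    also have "\<dots> < min e r"
      using that s unfolding s_def by simp
    finally show ?thesis .
  qed
  have box: "R + a *\<^sub>R axis k 1 + b *\<^sub>R axis l 1 \<in> V"
    if "0 \<le> a" "a \<le> s" "0 \<le> b" "b \<le> s" for a b k l
    using near[OF that, of k l] r(2) by (auto simp: dist_commute)
  obtain a1 b1 where ab1: "0 \<le> a1" "a1 \<le> s" "0 \<le> b1" "b1 \<le> s"
    "P (R + s *\<^sub>R axis i 1 + s *\<^sub>R axis j 1) - P (R + s *\<^sub>R axis i 1) - P (R + s *\<^sub>R axis j 1) + P R
       = s\<^sup>2 * pd j Fi (R + a1 *\<^sub>R axis i 1 + b1 *\<^sub>R axis j 1)"
    using mixed_difference_mvt[OF s box dP pi dFi] by blast
  obtain a2 b2 where ab2: "0 \<le> a2" "a2 \<le> s" "0 \<le> b2" "b2 \<le> s"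
    "P (R + s *\<^sub>R axis j 1 + s *\<^sub>R axis i 1) - P (R + s *\<^sub>R axis j 1) - P (R + s *\<^sub>R axis i 1) + P R
       = s\<^sup>2 * pd i Fj (R + a2 *\<^sub>R axis j 1 + b2 *\<^sub>R axis i 1)"
    using mixed_difference_mvt[OF s box dP pj dFj] by blast
  have "pd j Fi (R + a1 *\<^sub>R axis i 1 + b1 *\<^sub>R axis j 1) = pd i Fj (R + a2 *\<^sub>R axis j 1 + b2 *\<^sub>R axis i 1)"
    using ab1(5) ab2(5) s by (simp add: algebra_simps)
  with near[OF ab1(1-4)] near[OF ab2(1-4)] show ?thesis
    by fastforce
qed

lemma eq_if_continuous_meet_nearby:
  fixes f g :: "'a::metric_space \<Rightarrow> real"
  assumes "continuous (at R) f" "continuous (at R) g"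
    and "\<And>e. e > 0 \<Longrightarrow> \<exists>x y. dist x R < e \<and> dist y R < e \<and> f x = g y"
  shows "f R = g R"
proof (rule ccontr)
  assume "f R \<noteq> g R"
  define d where "d = \<bar>f R - g R\<bar> / 2"
  have d: "d > 0" using \<open>f R \<noteq> g R\<close> unfolding d_def by simp
  obtain e1 where e1: "e1 > 0" "\<And>y. dist y R < e1 \<Longrightarrow> dist (f y) (f R) < d"
    using assms(1) d unfolding continuous_at_eps_delta by blast
  obtain e2 where e2: "e2 > 0" "\<And>y. dist y R < e2 \<Longrightarrow> dist (g y) (g R) < d"
    using assms(2) d unfolding continuous_at_eps_delta by blast
  obtain x y where "dist x R < min e1 e2" "dist y R < min e1 e2" "f x = g y"
    using assms(3)[of "min e1 e2"] e1 e2 by auto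
  then show False
    using e1(2)[of x] e2(2)[of y] unfolding d_def dist_real_def by (auto simp: abs_if split: if_splits)
qed

lemma pd_commute_potential:
  fixes P Fi Fj :: "real^'n::finite \<Rightarrow> real"
  assumes "open V" "R \<in> V"
    and "\<And>x. x \<in> V \<Longrightarrow> P differentiable (at x)"
    and "\<And>x. x \<in> V \<Longrightarrow> pd i P x = Fi x"
    and "\<And>x. x \<in> V \<Longrightarrow> pd j P x = Fj x"
    and "\<And>x. x \<in> V \<Longrightarrow> Fi differentiable (at x)"
    and "\<And>x. x \<in> V \<Longrightarrow> Fj differentiable (at x)"
    and "continuous (at R) (pd j Fi)" "continuous (at R) (pd i Fj)"
  shows "pd j Fi R = pd i Fj R"
  by (rule eq_if_continuous_meet_nearby[OF assms(8,9)], rule mixed_pd_meet_nearby[OF assms(1-7)])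

section \<open>Poincare lemma\<close>

lemma has_derivative_radial_integrand:
  fixes F :: "'n::finite \<Rightarrow> real^'n \<Rightarrow> real"
  assumes dF: "\<And>m. F m differentiable (at (R0 + t *\<^sub>R (x - R0)))"
    and closed: "\<And>m j. pd j (F m) (R0 + t *\<^sub>R (x - R0)) = pd m (F j) (R0 + t *\<^sub>R (x - R0))"
  shows "((\<lambda>x. \<Sum>j\<in>UNIV. F j (R0 + t *\<^sub>R (x - R0)) * (x - R0)$j) has_derivative
    (\<lambda>h. \<Sum>m\<in>UNIV. (F m (R0 + t *\<^sub>R (x - R0))
       + t * (\<Sum>j\<in>UNIV. (x - R0)$j * pd j (F m) (R0 + t *\<^sub>R (x - R0)))) * h$m)) (at x within S)"
proof -
  define y where "y = R0 + t *\<^sub>R (x - R0)"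
  have dFj: "((\<lambda>x. F j (R0 + t *\<^sub>R (x - R0))) has_derivative
      (\<lambda>h. t * (\<Sum>m\<in>UNIV. h$m * pd m (F j) y))) (at x within S)" for j
  proof -
    have "((\<lambda>x. R0 + t *\<^sub>R (x - R0)) has_derivative (\<lambda>h. t *\<^sub>R h)) (at x within S)"
      by (auto intro!: derivative_eq_intros)
    from has_derivative_compose[OF this has_derivative_pd_sum[OF dF[of j]]]
    show ?thesis
      unfolding y_def by (simp add: sum_distrib_left mult.assoc)
  qed
  have dc: "((\<lambda>x. (x - R0)$j) has_derivative (\<lambda>h. h$j)) (at x within S)" for j
    using bounded_linear.has_derivative[OF bounded_linear_vec_nth
        has_derivative_diff[OF has_derivative_ident has_derivative_const]] by simp
  have "((\<lambda>x. \<Sum>j\<in>UNIV. F j (R0 + t *\<^sub>R (x - R0)) * (x - R0)$j) has_derivative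
      (\<lambda>h. \<Sum>j\<in>UNIV. t * (\<Sum>m\<in>UNIV. h$m * pd m (F j) y) * (x - R0)$j + F j y * h$j)) (at x within S)"
    unfolding y_def
    by (rule has_derivative_sum, rule has_derivative_eq_rhs[OF has_derivative_mult[OF dFj dc]])
      (auto simp: algebra_simps y_def)
  moreover have "(\<Sum>j\<in>UNIV. t * (\<Sum>m\<in>UNIV. h$m * pd m (F j) y) * (x - R0)$j + F j y * h$j)
      = (\<Sum>m\<in>UNIV. (F m y + t * (\<Sum>j\<in>UNIV. (x - R0)$j * pd j (F m) y)) * h$m)" for h
  proof -
    \<comment> \<open>closedness turns the x-derivative of the integrand into a total t-derivative\<close>
    have "(\<Sum>j\<in>UNIV. t * (\<Sum>m\<in>UNIV. h$m * pd m (F j) y) * (x - R0)$j)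
        = (\<Sum>m\<in>UNIV. \<Sum>j\<in>UNIV. t * h$m * pd j (F m) y * (x - R0)$j)"
      using closed unfolding y_def[symmetric]
      by (subst sum.swap) (simp add: sum_distrib_left sum_distrib_right algebra_simps)
    thus ?thesis
      by (simp add: sum.distrib sum_distrib_left sum_distrib_right algebra_simps)
  qed
  ultimately show ?thesis
    unfolding y_def by simp
qed

lemma integral_radial_derivative:
  fixes f :: "real^'n::finite \<Rightarrow> real"
  assumes "\<And>t. t \<in> {0..1} \<Longrightarrow> f differentiable (at (R0 + t *\<^sub>R (x - R0)))"
  shows "integral {0..1} (\<lambda>t. f (R0 + t *\<^sub>R (x - R0))
      + t * (\<Sum>j\<in>UNIV. (x - R0)$j * pd j f (R0 + t *\<^sub>R (x - R0)))) = f x"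
proof -
  have "((\<lambda>t. t * f (R0 + t *\<^sub>R (x - R0))) has_vector_derivative
      f (R0 + t *\<^sub>R (x - R0)) + t * (\<Sum>j\<in>UNIV. (x - R0)$j * pd j f (R0 + t *\<^sub>R (x - R0))))
      (at t within {0..1})" if t: "t \<in> {0..1}" for t
  proof -
    have "((\<lambda>t. R0 + t *\<^sub>R (x - R0)) has_derivative (\<lambda>h. h *\<^sub>R (x - R0))) (at t within {0..1})"
      by (auto intro!: derivative_eq_intros)
    from has_derivative_compose[OF this has_derivative_pd_sum[OF assms[OF t]]]
    have "((\<lambda>t. f (R0 + t *\<^sub>R (x - R0))) has_real_derivative
        (\<Sum>j\<in>UNIV. (x - R0)$j * pd j f (R0 + t *\<^sub>R (x - R0)))) (at t within {0..1})"
      unfolding has_field_derivative_def o_def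
      by (rule has_derivative_eq_rhs) (auto simp: fun_eq_iff sum_distrib_left algebra_simps)
    then show ?thesis
      by (auto intro!: derivative_eq_intros simp: has_real_derivative_iff_has_vector_derivative[symmetric])
  qed
  from fundamental_theorem_of_calculus[OF _ this]
  show ?thesis
    by (simp add: integral_unique)
qed

lemma radial_point_in_ball:
  fixes x R0 :: "'a::real_normed_vector"
  assumes "x \<in> ball R0 r" "t \<in> {0..1}"
  shows "R0 + t *\<^sub>R (x - R0) \<in> ball R0 r"
proof -
  have "dist R0 (R0 + t *\<^sub>R (x - R0)) = \<bar>t\<bar> * dist R0 x"
    by (simp add: dist_norm norm_minus_commute)
  also have "\<dots> \<le> dist R0 x"
    using assms by (simp add: mult_left_le_one_le)
  finally show ?thesis
    using assms by simp
qed

definition radial_potential :: "real^'n::finite \<Rightarrow> ('n \<Rightarrow> real^'n \<Rightarrow> real) \<Rightarrow> real^'n \<Rightarrow> real" where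
  "radial_potential R0 F x =
     integral {0..1} (\<lambda>t. \<Sum>j\<in>UNIV. F j (R0 + t *\<^sub>R (x - R0)) * (x - R0)$j)"

definition radial_gradient_integrand ::
  "real^'n::finite \<Rightarrow> ('n \<Rightarrow> real^'n \<Rightarrow> real) \<Rightarrow> real^'n \<Rightarrow> real \<Rightarrow> (real^'n) \<Rightarrow>\<^sub>L real" where
  "radial_gradient_integrand R0 F x t = (\<Sum>m\<in>UNIV.
     (F m (R0 + t *\<^sub>R (x - R0)) + t * (\<Sum>j\<in>UNIV. (x - R0)$j * pd j (F m) (R0 + t *\<^sub>R (x - R0))))
       *\<^sub>R blinfun_inner_left (axis m 1))"

lemma blinfun_apply_radial_gradient_integrand:
  "blinfun_apply (radial_gradient_integrand R0 F x t) h = (\<Sum>m\<in>UNIV.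
     (F m (R0 + t *\<^sub>R (x - R0)) + t * (\<Sum>j\<in>UNIV. (x - R0)$j * pd j (F m) (R0 + t *\<^sub>R (x - R0)))) * h$m)"
  by (simp add: radial_gradient_integrand_def blinfun.sum_left blinfun.scaleR_left inner_axis mult.commute)

lemma continuous_on_radial_gradient_integrand:
  fixes F :: "'n::finite \<Rightarrow> real^'n \<Rightarrow> real"
  assumes dF: "\<And>m x. x \<in> ball R0 r \<Longrightarrow> F m differentiable (at x)"
    and cF: "\<And>m j. continuous_on (ball R0 r) (pd j (F m))"
  shows "continuous_on (ball R0 r \<times> {0..1}) (\<lambda>(x, t). radial_gradient_integrand R0 F x t)"
proof -
  have cont_F: "continuous_on (ball R0 r) (F m)" for m
    using dF by (meson continuous_at_imp_continuous_on differentiable_imp_continuous_within)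
  have cont_\<gamma>: "continuous_on (ball R0 r \<times> {0..1}) (\<lambda>(x, t). R0 + t *\<^sub>R (x - R0))"
    by (auto intro!: continuous_intros simp: split_beta)
  have \<gamma>_img: "(\<lambda>(x, t). R0 + t *\<^sub>R (x - R0)) ` (ball R0 r \<times> {0..1}) \<subseteq> ball R0 r"
    by (auto simp del: mem_ball intro!: radial_point_in_ball)
  have "continuous_on (ball R0 r \<times> {0..1}) (\<lambda>p. F m ((\<lambda>(x, t). R0 + t *\<^sub>R (x - R0)) p))"
    "continuous_on (ball R0 r \<times> {0..1}) (\<lambda>p. pd j (F m) ((\<lambda>(x, t). R0 + t *\<^sub>R (x - R0)) p))" for m j
    using continuous_on_compose2[OF cont_F cont_\<gamma> \<gamma>_img]
      continuous_on_compose2[OF cF cont_\<gamma> \<gamma>_img] by auto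
  then show ?thesis
    unfolding radial_gradient_integrand_def split_beta by (auto intro!: continuous_intros)
qed

lemma has_derivative_radial_potential:
  fixes F :: "'n::finite \<Rightarrow> real^'n \<Rightarrow> real"
  assumes dF: "\<And>m x. x \<in> ball R0 r \<Longrightarrow> F m differentiable (at x)"
    and cF: "\<And>m j. continuous_on (ball R0 r) (pd j (F m))"
    and closed: "\<And>m j x. x \<in> ball R0 r \<Longrightarrow> pd j (F m) x = pd m (F j) x"
    and x: "x \<in> ball R0 r"
  shows "(radial_potential R0 F has_derivative
    blinfun_apply (integral {0..1} (radial_gradient_integrand R0 F x))) (at x)"
proof -
  have "((\<lambda>x. \<Sum>j\<in>UNIV. F j (R0 + t *\<^sub>R (x - R0)) * (x - R0)$j) has_derivative
      blinfun_apply (radial_gradient_integrand R0 F x t)) (at x within ball R0 r)"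
    if "x \<in> ball R0 r" "t \<in> cbox 0 1" for x t
  proof -
    have "R0 + t *\<^sub>R (x - R0) \<in> ball R0 r"
      using radial_point_in_ball[OF that(1), of t] that(2) by simp
    then show ?thesis
      unfolding blinfun_apply_radial_gradient_integrand[abs_def]
      by (intro has_derivative_radial_integrand) (use dF closed in auto)
  qed
  moreover have "(\<lambda>t. \<Sum>j\<in>UNIV. F j (R0 + t *\<^sub>R (x - R0)) * (x - R0)$j) integrable_on cbox 0 1"
    if "x \<in> ball R0 r" for x
  proof -
    have "continuous_on (ball R0 r) (F j)" for j
      using dF by (meson continuous_at_imp_continuous_on differentiable_imp_continuous_within)
    then have "continuous_on {0..1} (\<lambda>t. F j (R0 + t *\<^sub>R (x - R0)))" for j
      by (rule continuous_on_compose2) (use radial_point_in_ball[OF that] in \<open>auto intro!: continuous_intros\<close>)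
    then show ?thesis
      by (auto intro!: integrable_continuous_interval continuous_intros)
  qed
  ultimately have "((\<lambda>x. integral (cbox 0 1) (\<lambda>t. \<Sum>j\<in>UNIV. F j (R0 + t *\<^sub>R (x - R0)) * (x - R0)$j))
      has_derivative blinfun_apply (integral (cbox 0 1) (radial_gradient_integrand R0 F x)))
      (at x within ball R0 r)"
    using x continuous_on_radial_gradient_integrand[of R0 r F, OF dF cF] by (intro leibniz_rule) auto
  then show ?thesis
    using at_within_open[OF x] by (simp add: radial_potential_def[abs_def])
qed

lemma pd_radial_potential:
  fixes F :: "'n::finite \<Rightarrow> real^'n \<Rightarrow> real"
  assumes dF: "\<And>m x. x \<in> ball R0 r \<Longrightarrow> F m differentiable (at x)"
    and cF: "\<And>m j. continuous_on (ball R0 r) (pd j (F m))"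
    and closed: "\<And>m j x. x \<in> ball R0 r \<Longrightarrow> pd j (F m) x = pd m (F j) x"
    and x: "x \<in> ball R0 r"
  shows "pd k (radial_potential R0 F) x = F k x"
proof -
  have "continuous_on {0..1} (radial_gradient_integrand R0 F x)"
    by (rule continuous_on_compose2[OF continuous_on_radial_gradient_integrand[of R0 r F, OF dF cF],
          of _ "\<lambda>t. (x, t)", simplified])
      (use x in \<open>auto intro!: continuous_intros\<close>)
  then have "radial_gradient_integrand R0 F x integrable_on {0..1}"
    by (simp add: integrable_continuous_interval)
  then have "pd k (radial_potential R0 F) x
      = integral {0..1} (\<lambda>t. blinfun_apply (radial_gradient_integrand R0 F x t) (axis k 1))"
    using pd_eq_derivative[OF has_derivative_radial_potential[OF dF cF closed x]]
      blinfun_apply_integral by simp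
  also have "\<dots> = F k x"
    by (simp add: radial_gradient_integrand_def blinfun.sum_left blinfun.scaleR_left inner_axis_axis
        if_distrib del: vector_minus_component cong: if_cong)
      (rule integral_radial_derivative, use dF radial_point_in_ball[OF x] in auto)
  finally show ?thesis .
qed

lemma poincare_lemma_ball:
  fixes F :: "'n::finite \<Rightarrow> real^'n \<Rightarrow> real"
  assumes "\<And>m x. x \<in> ball R0 r \<Longrightarrow> F m differentiable (at x)"
    and "\<And>m j. continuous_on (ball R0 r) (pd j (F m))"
    and "\<And>m j x. x \<in> ball R0 r \<Longrightarrow> pd j (F m) x = pd m (F j) x"
  shows "\<exists>P. \<forall>x\<in>ball R0 r. P differentiable (at x) \<and> (\<forall>k. pd k P x = F k x)"
  using has_derivative_radial_potential[OF assms] pd_radial_potential[OF assms]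
  by (blast intro: differentiableI)

section \<open>Closed families and their potentials\<close>

text \<open>G i j stands for the j-th component of a 1-form, computed with the help of an
  auxiliary index i \<noteq> j, as the paper's P_j is computed from mu^i.\<close>

definition index_independent :: "(real^'n::finite) set \<Rightarrow> ('n \<Rightarrow> 'n \<Rightarrow> real^'n \<Rightarrow> real) \<Rightarrow> bool" where
  "index_independent U G \<longleftrightarrow> (\<forall>R\<in>U. \<forall>i k j. i \<noteq> j \<and> k \<noteq> j \<longrightarrow> G i j R = G k j R)"

definition closed_family :: "(real^'n::finite) set \<Rightarrow> ('n \<Rightarrow> 'n \<Rightarrow> real^'n \<Rightarrow> real) \<Rightarrow> bool" where
  "closed_family U G \<longleftrightarrow>
    (\<forall>R\<in>U. \<forall>i j k l. i \<noteq> j \<and> k \<noteq> i \<and> l \<noteq> j \<longrightarrow> pd j (G k i) R = pd i (G l j) R)"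

definition is_potential ::
  "(real^'n::finite) set \<Rightarrow> (real^'n \<Rightarrow> real) \<Rightarrow> ('n \<Rightarrow> 'n \<Rightarrow> real^'n \<Rightarrow> real) \<Rightarrow> bool" where
  "is_potential V P G \<longleftrightarrow>
    (\<forall>R\<in>V. P differentiable (at R) \<and> (\<forall>i j. i \<noteq> j \<longrightarrow> pd j P R = G i j R))"

lemma exists_index_neq:
  assumes "2 \<le> CARD('n::finite)"
  shows "\<exists>k::'n. k \<noteq> m"
proof (rule ccontr)
  assume "\<not> (\<exists>k::'n. k \<noteq> m)"
  hence "CARD('n) \<le> card {m}"
    by (intro card_mono) auto
  with assms show False by simp
qed

lemma local_potential_if_closed_family:
  assumes n2: "2 \<le> CARD('n::finite)" and "open U" "R0 \<in> U"
    and indep: "index_independent U G" and closed: "closed_family U G"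
    and dG: "\<And>i j R. i \<noteq> j \<Longrightarrow> R \<in> U \<Longrightarrow> G i j differentiable (at R)"
    and cG: "\<And>i j k. i \<noteq> j \<Longrightarrow> continuous_on U (pd k (G i j))"
  shows "\<exists>V P. open V \<and> R0 \<in> V \<and> V \<subseteq> U \<and> is_potential V P (G :: 'n \<Rightarrow> 'n \<Rightarrow> real^'n \<Rightarrow> real)"
proof -
  obtain r where r: "r > 0" "ball R0 r \<subseteq> U"
    using \<open>open U\<close> \<open>R0 \<in> U\<close> open_contains_ball by blast
  define other where "other m = (SOME k. k \<noteq> m)" for m :: 'n
  have other: "other m \<noteq> m" for m
    unfolding other_def using someI_ex[OF exists_index_neq[OF n2]] .
  obtain P where P: "\<forall>x\<in>ball R0 r. P differentiable (at x) \<and> (\<forall>k. pd k P x = G (other k) k x)"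
  proof (rule exE[OF poincare_lemma_ball[of R0 r "\<lambda>m. G (other m) m"]])
    show "G (other m) m differentiable (at x)" if "x \<in> ball R0 r" for m x
      using dG[OF other] that r(2) by blast
    show "continuous_on (ball R0 r) (pd j (G (other m) m))" for m j
      by (rule continuous_on_subset[OF cG[OF other] r(2)])
    show "pd j (G (other m) m) x = pd m (G (other j) j) x" if "x \<in> ball R0 r" for m j x
    proof (cases "j = m")
      case False
      then show ?thesis
        using closed[unfolded closed_family_def, rule_format, of x m j "other m" "other j"]
          other that r(2) by auto
    qed simp
  qed blast
  have "is_potential (ball R0 r) P G"
    unfolding is_potential_def
  proof (intro ballI conjI allI impI)
    fix R assume "R \<in> ball R0 r"
    then show "P differentiable (at R)"
      using P by blast
  next
    fix R and i j :: 'n assume R: "R \<in> ball R0 r" and "i \<noteq> j"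
    have "pd j P R = G (other j) j R"
      using P R by blast
    also have "\<dots> = G i j R"
      using indep[unfolded index_independent_def, rule_format, of R "other j" j i] R r(2) other \<open>i \<noteq> j\<close>
      by auto
    finally show "pd j P R = G i j R" .
  qed
  with r show ?thesis
    by (intro exI[of _ "ball R0 r"] exI[of _ P]) auto
qed

lemma closed_family_if_local_potential:
  fixes G :: "'n::finite \<Rightarrow> 'n \<Rightarrow> real^'n \<Rightarrow> real"
  assumes "open U"
    and pot: "\<forall>R0\<in>U. \<exists>V P. open V \<and> R0 \<in> V \<and> V \<subseteq> U \<and> is_potential V P G"
    and dG: "\<And>i j R. i \<noteq> j \<Longrightarrow> R \<in> U \<Longrightarrow> G i j differentiable (at R)"
    and cG: "\<And>i j k. i \<noteq> j \<Longrightarrow> continuous_on U (pd k (G i j))"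
  shows "index_independent U G \<and> closed_family U G"
proof
  show "index_independent U G"
    unfolding index_independent_def
  proof (intro ballI allI impI)
    fix R and i k j :: 'n assume "R \<in> U" "i \<noteq> j \<and> k \<noteq> j"
    moreover obtain V P where "R \<in> V" "is_potential V P G"
      using pot \<open>R \<in> U\<close> by blast
    ultimately have "pd j P R = G i j R" "pd j P R = G k j R"
      unfolding is_potential_def by auto
    then show "G i j R = G k j R" by simp
  qed
  show "closed_family U G"
    unfolding closed_family_def
  proof (intro ballI allI impI)
    fix R and i j k l :: 'n assume "R \<in> U" and ne: "i \<noteq> j \<and> k \<noteq> i \<and> l \<noteq> j"
    then obtain V P where V: "open V" "R \<in> V" "V \<subseteq> U" "is_potential V P G"
      using pot by blast
    show "pd j (G k i) R = pd i (G l j) R"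
    proof (rule pd_commute_potential[OF V(1,2)])
      show "P differentiable (at x)" "pd i P x = G k i x" "pd j P x = G l j x"
        if "x \<in> V" for x
        using V(4) ne that unfolding is_potential_def by auto
      show "G k i differentiable (at x)" "G l j differentiable (at x)" if "x \<in> V" for x
        using dG ne that V(3) by blast+
      show "continuous (at R) (pd j (G k i))" "continuous (at R) (pd i (G l j))"
        using cG ne \<open>R \<in> U\<close> \<open>open U\<close> continuous_on_eq_continuous_at by blast+
    qed
  qed
qed

lemma closed_family_iff_local_potential:
  fixes G :: "'n::finite \<Rightarrow> 'n \<Rightarrow> real^'n \<Rightarrow> real"
  assumes "2 \<le> CARD('n)" "open U"
    and "\<And>i j R. i \<noteq> j \<Longrightarrow> R \<in> U \<Longrightarrow> G i j differentiable (at R)"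
    and "\<And>i j k. i \<noteq> j \<Longrightarrow> continuous_on U (pd k (G i j))"
  shows "index_independent U G \<and> closed_family U G \<longleftrightarrow>
    (\<forall>R0\<in>U. \<exists>V P. open V \<and> R0 \<in> V \<and> V \<subseteq> U \<and> is_potential V P G)"
proof
  assume closed: "index_independent U G \<and> closed_family U G"
  show "\<forall>R0\<in>U. \<exists>V P. open V \<and> R0 \<in> V \<and> V \<subseteq> U \<and> is_potential V P G"
  proof
    fix R0 assume "R0 \<in> U"
    show "\<exists>V P. open V \<and> R0 \<in> V \<and> V \<subseteq> U \<and> is_potential V P G"
      by (rule local_potential_if_closed_family[OF assms(1,2) \<open>R0 \<in> U\<close>
            closed[THEN conjunct1] closed[THEN conjunct2] assms(3,4)])
  qed
next
  assume "\<forall>R0\<in>U. \<exists>V P. open V \<and> R0 \<in> V \<and> V \<subseteq> U \<and> is_potential V P G"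
  then show "index_independent U G \<and> closed_family U G"
    by (rule closed_family_if_local_potential[OF assms(2) _ assms(3,4)])
qed

lemma closed_family_iff_symmetric:
  fixes G :: "'n::finite \<Rightarrow> 'n \<Rightarrow> real^'n \<Rightarrow> real"
  assumes "open U" and indep: "index_independent U G"
  shows "closed_family U G \<longleftrightarrow> (\<forall>R\<in>U. \<forall>i j. i \<noteq> j \<longrightarrow> pd i (G i j) R = pd j (G j i) R)"
proof
  assume "closed_family U G"
  then show "\<forall>R\<in>U. \<forall>i j. i \<noteq> j \<longrightarrow> pd i (G i j) R = pd j (G j i) R"
    unfolding closed_family_def by (metis (no_types))
next
  assume sym: "\<forall>R\<in>U. \<forall>i j. i \<noteq> j \<longrightarrow> pd i (G i j) R = pd j (G j i) R"
  have change_index: "pd m (G k j) R = pd m (G i j) R" if "R \<in> U" "i \<noteq> j" "k \<noteq> j" for R i j k m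
    using indep that unfolding index_independent_def
    by (intro pd_cong_open[OF assms(1)]) blast+
  show "closed_family U G"
    unfolding closed_family_def
  proof (intro ballI allI impI)
    fix R and i j k l :: 'n assume R: "R \<in> U" and ne: "i \<noteq> j \<and> k \<noteq> i \<and> l \<noteq> j"
    have "pd j (G k i) R = pd j (G j i) R"
      using change_index[of R j i k j] R ne by auto
    also have "\<dots> = pd i (G i j) R"
      using sym[rule_format, OF R, of i j] ne by simp
    also have "\<dots> = pd i (G l j) R"
      using change_index[of R i j l i] R ne by auto
    finally show "pd j (G k i) R = pd i (G l j) R" .
  qed
qed

section \<open>Euler-Lagrange equations of the Lagrangian\<close>

lemma jet_simps [simp]: "jv (a, b, c) = a" "jd1 (a, b, c) = b" "jd2 (a, b, c) = c"
  by (simp_all add: jv_def jd1_def jd2_def)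

lemma power2_diff_divide_swap: "((x::real) - y)\<^sup>2 / (a - b) = - ((y - x)\<^sup>2 / (b - a))"
  by (simp add: power2_commute minus_divide_right)

lemma dd2_Lag: "dd2 a k l (Lag c i j) R J = 0"
  unfolding dd2_def Lag_def by simp

lemma dd1_Lag:
  assumes "i \<noteq> j"
  shows "dd1 a k (Lag c i j) R J =
      (if a = Some j \<and> k = i then jd1 J None j else 0)
    + (if a = None \<and> k = j then jd1 J (Some j) i
        + (jv J (Some j) - jv J (Some i))\<^sup>2 / (c j (R$j) - c i (R$i)) * jd1 J None i else 0)
    - (if a = Some i \<and> k = j then jd1 J None i else 0)
    + (if a = None \<and> k = i then - jd1 J (Some i) j
        + (jv J (Some j) - jv J (Some i))\<^sup>2 / (c j (R$j) - c i (R$i)) * jd1 J None j else 0)"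
proof -
  \<comment> \<open>an opaque constant K keeps the derivative rules from demanding c j (R$j) \<noteq> c i (R$i)\<close>
  define K where "K = 1 / (c j (R$j) - c i (R$i))"
  have e: "(x::real) / (c j (R$j) - c i (R$i)) = x * K" for x
    unfolding K_def by simp
  show ?thesis
    unfolding dd1_def Lag_def e using assms
    by (cases a; (cases "k = i"; cases "k = j"); (cases "the a = i"; cases "the a = j");
        auto intro!: DERIV_imp_deriv derivative_eq_intros)
qed

lemma dval_Lag:
  assumes "i \<noteq> j"
  shows "dval a (Lag c i j) R J =
      (if a = Some j then 2 * (jv J (Some j) - jv J (Some i)) / (c j (R$j) - c i (R$i))
         * jd1 J None i * jd1 J None j else 0)
    - (if a = Some i then 2 * (jv J (Some j) - jv J (Some i)) / (c j (R$j) - c i (R$i))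
         * jd1 J None i * jd1 J None j else 0)"
proof -
  define K where "K = 1 / (c j (R$j) - c i (R$i))"
  have e: "(x::real) / (c j (R$j) - c i (R$i)) = x * K" for x
    unfolding K_def by simp
  show ?thesis
    unfolding dval_def Lag_def e using assms
    by (cases a; (cases "the a = i"; cases "the a = j");
        auto intro!: DERIV_imp_deriv derivative_eq_intros; simp add: algebra_simps)
qed

lemma ev_dd2_Lag: "ev w (dd2 a k l (Lag c i j)) = (\<lambda>R. 0)"
  by (simp add: fun_eq_iff ev_def dd2_Lag)

lemma ev_dd1_Lag:
  assumes "i \<noteq> j"
  shows "ev (flds u mu) (dd1 a k (Lag c i j)) = (\<lambda>R.
      (if a = Some j \<and> k = i then pd j u R else 0)
    + (if a = None \<and> k = j then Pf c u mu j i R else 0)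
    - (if a = Some i \<and> k = j then pd i u R else 0)
    - (if a = None \<and> k = i then Pf c u mu i j R else 0))"
  using assms
  by (auto simp: fun_eq_iff ev_def jetw_def dd1_Lag flds_def Pf_def
      power2_diff_divide_swap[of "mu j _" "mu i _"])

lemma ev_dval_Lag:
  assumes "i \<noteq> j"
  shows "ev (flds u mu) (dval a (Lag c i j)) R =
      (if a = Some j then 2 * (mu j R - mu i R) / (c j (R$j) - c i (R$i)) * pd i u R * pd j u R else 0)
    - (if a = Some i then 2 * (mu j R - mu i R) / (c j (R$j) - c i (R$i)) * pd i u R * pd j u R else 0)"
  using assms by (simp add: ev_def jetw_def dval_Lag flds_def)

lemma var0_Lag:
  assumes "i \<noteq> j" "Pf c u mu i j differentiable (at R)" "pd i u differentiable (at R)"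
  shows "var0 (Lag c) i j (flds u mu) a R =
      (if a = Some j then 2 * (mu j R - mu i R) / (c j (R$j) - c i (R$i)) * pd i u R * pd j u R
         - pd i (pd j u) R else 0)
    + (if a = Some i then pd j (pd i u) R
         - 2 * (mu j R - mu i R) / (c j (R$j) - c i (R$i)) * pd i u R * pd j u R else 0)
    + (if a = None then pd i (Pf c u mu i j) R - pd j (Pf c u mu j i) R else 0)"
  using assms pd_minus[OF assms(2), of i] pd_minus[OF assms(3), of j]
  by (cases a) (auto simp: var0_def ev_dd2_Lag ev_dval_Lag ev_dd1_Lag)

lemma varj_Lag:
  assumes "i \<noteq> j"
  shows "varj (Lag c) i j (flds u mu) a R
    = (if a = None then Pf c u mu j i R else 0) - (if a = Some i then pd i u R else 0)"
  using assms by (auto simp: varj_def ev_dd2_Lag ev_dd1_Lag)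

lemma vark_Lag:
  assumes "i \<noteq> j" "i \<noteq> k" "j \<noteq> k"
  shows "vark (Lag c) i j k (flds u mu) a R = 0"
  using assms by (auto simp: vark_def ev_dd2_Lag ev_dd1_Lag)

lemma multiform_EL_Lag_iff:
  assumes dPf: "\<And>i j. i \<noteq> j \<Longrightarrow> Pf c u mu i j differentiable (at R)"
    and du: "\<And>i. pd i u differentiable (at R)"
  shows "multiform_EL (Lag c) (flds u mu) R \<longleftrightarrow>
    (\<forall>i j k. i \<noteq> j \<and> j \<noteq> k \<and> i \<noteq> k \<longrightarrow>
       pd i (Pf c u mu i j) R = pd j (Pf c u mu j i) R \<and> Pf c u mu j i R = Pf c u mu k i R
     \<and> pd i (pd j u) R = 2 * (mu j R - mu i R) / (c j (R$j) - c i (R$i)) * pd i u R * pd j u R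
     \<and> pd j (pd i u) R = 2 * (mu j R - mu i R) / (c j (R$j) - c i (R$i)) * pd i u R * pd j u R)"
    (is "_ \<longleftrightarrow> (\<forall>i j k. ?distinct i j k \<longrightarrow> ?C i j k)")
proof -
  have triple: "(\<forall>a. var0 (Lag c) i j (flds u mu) a R = 0
      \<and> varj (Lag c) i j (flds u mu) a R - varj (Lag c) i k (flds u mu) a R = 0) \<longleftrightarrow> ?C i j k"
    if "?distinct i j k" for i j k
  proof
    assume "\<forall>a. var0 (Lag c) i j (flds u mu) a R = 0
      \<and> varj (Lag c) i j (flds u mu) a R - varj (Lag c) i k (flds u mu) a R = 0"
    from this[rule_format, of None] this[rule_format, of "Some i"] this[rule_format, of "Some j"]
    show "?C i j k"
      using that by (auto simp: var0_Lag varj_Lag dPf du)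
  next
    assume "?C i j k"
    then show "\<forall>a. var0 (Lag c) i j (flds u mu) a R = 0
      \<and> varj (Lag c) i j (flds u mu) a R - varj (Lag c) i k (flds u mu) a R = 0"
      using that by (auto simp: var0_Lag varj_Lag dPf du)
  qed
  have "multiform_EL (Lag c) (flds u mu) R \<longleftrightarrow> (\<forall>i j k. ?distinct i j k \<longrightarrow>
      (\<forall>a. var0 (Lag c) i j (flds u mu) a R = 0
        \<and> varj (Lag c) i j (flds u mu) a R - varj (Lag c) i k (flds u mu) a R = 0))"
    unfolding multiform_EL_def by (auto simp: ev_dd2_Lag vark_Lag)
  also have "\<dots> \<longleftrightarrow> (\<forall>i j k. ?distinct i j k \<longrightarrow> ?C i j k)"
    using triple by blast
  finally show ?thesis .
qed

lemma exists_third_index: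
  assumes "3 \<le> CARD('n::finite)"
  shows "\<exists>k::'n. k \<noteq> i \<and> k \<noteq> j"
proof (rule ccontr)
  assume "\<not> (\<exists>k::'n. k \<noteq> i \<and> k \<noteq> j)"
  hence "UNIV \<subseteq> {i, j}" by auto
  hence "CARD('n) \<le> card {i, j}" by (simp add: card_mono)
  also have "\<dots> \<le> 2" by (simp add: card_insert_if)
  finally show False using assms by simp
qed

definition u_equation ::
  "('n::finite \<Rightarrow> real \<Rightarrow> real) \<Rightarrow> (real^'n \<Rightarrow> real) \<Rightarrow> ('n \<Rightarrow> real^'n \<Rightarrow> real) \<Rightarrow> (real^'n) set \<Rightarrow> bool"
where
  "u_equation c u mu V \<longleftrightarrow> (\<forall>R\<in>V. \<forall>i j. i \<noteq> j \<longrightarrow>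
     pd i (pd j u) R = 2 * (mu j R - mu i R) / (c j (R$j) - c i (R$i)) * pd i u R * pd j u R)"

lemma u_equation_swap:
  "2 * ((a::real) - b) / (x - y) * p * q = 2 * (b - a) / (y - x) * q * p"
proof -
  have "(b - a) / (y - x) = (a - b) / (x - y)"
    using minus_divide_divide[of "a - b" "x - y"] by simp
  then have "2 * ((a - b) / (x - y)) * (p * q) = 2 * ((b - a) / (y - x)) * (q * p)"
    by (simp add: mult.commute)
  then show ?thesis by simp
qed

lemma multiform_EL_Lag_on_iff:
  fixes c :: "'n::finite \<Rightarrow> real \<Rightarrow> real"
  assumes n3: "3 \<le> CARD('n)" and "open U"
    and dPf: "\<And>i j R. i \<noteq> j \<Longrightarrow> R \<in> U \<Longrightarrow> Pf c u mu i j differentiable (at R)"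
    and du: "\<And>i R. R \<in> U \<Longrightarrow> pd i u differentiable (at R)"
  shows "(\<forall>R\<in>U. multiform_EL (Lag c) (flds u mu) R) \<longleftrightarrow>
    index_independent U (Pf c u mu) \<and> closed_family U (Pf c u mu)
    \<and> u_equation c u mu U"
proof -
  have "(\<forall>R\<in>U. multiform_EL (Lag c) (flds u mu) R) \<longleftrightarrow>
    (\<forall>R\<in>U. \<forall>i j k. i \<noteq> j \<and> j \<noteq> k \<and> i \<noteq> k \<longrightarrow>
       pd i (Pf c u mu i j) R = pd j (Pf c u mu j i) R \<and> Pf c u mu j i R = Pf c u mu k i R
     \<and> pd i (pd j u) R = 2 * (mu j R - mu i R) / (c j (R$j) - c i (R$i)) * pd i u R * pd j u R
     \<and> pd j (pd i u) R = 2 * (mu j R - mu i R) / (c j (R$j) - c i (R$i)) * pd i u R * pd j u R)"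
    by (rule ball_cong[OF refl], rule multiform_EL_Lag_iff) (use dPf du in auto)
  also have "\<dots> \<longleftrightarrow> index_independent U (Pf c u mu)
      \<and> (\<forall>R\<in>U. \<forall>i j. i \<noteq> j \<longrightarrow> pd i (Pf c u mu i j) R = pd j (Pf c u mu j i) R)
      \<and> u_equation c u mu U"
    (is "(\<forall>R\<in>U. \<forall>i j k. ?distinct i j k \<longrightarrow> ?C R i j k) \<longleftrightarrow> ?I \<and> ?S \<and> ?E")
  proof
    assume C: "\<forall>R\<in>U. \<forall>i j k. ?distinct i j k \<longrightarrow> ?C R i j k"
    show "?I \<and> ?S \<and> ?E"
      unfolding index_independent_def u_equation_def
    proof (intro conjI ballI allI impI)
      fix R and i k j :: 'n assume R: "R \<in> U" and ne: "i \<noteq> j \<and> k \<noteq> j"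
      show "Pf c u mu i j R = Pf c u mu k j R"
        using C[rule_format, OF R, of j i k] ne by (cases "i = k") auto
    next
      fix R and i j :: 'n assume R: "R \<in> U" and "i \<noteq> j"
      moreover obtain k where "k \<noteq> i" "k \<noteq> j"
        using exists_third_index[OF n3] by blast
      ultimately show "pd i (Pf c u mu i j) R = pd j (Pf c u mu j i) R"
        and "pd i (pd j u) R = 2 * (mu j R - mu i R) / (c j (R$j) - c i (R$i)) * pd i u R * pd j u R"
        using C[rule_format, OF R, of i j k] by auto
    qed
  next
    assume "?I \<and> ?S \<and> ?E"
    then have I: ?I and S: ?S and E: ?E by blast+
    show "\<forall>R\<in>U. \<forall>i j k. ?distinct i j k \<longrightarrow> ?C R i j k"
    proof (intro ballI allI impI)
      fix R and i j k :: 'n assume R: "R \<in> U" and ne: "?distinct i j k"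
      show "?C R i j k"
        using S[rule_format, OF R, of i j] I[unfolded index_independent_def, rule_format, OF R, of j i k]
          E[unfolded u_equation_def, rule_format, OF R, of i j]
          E[unfolded u_equation_def, rule_format, OF R, of j i]
          u_equation_swap[of "mu i R" "mu j R" "c i (R$i)" "c j (R$j)" "pd j u R" "pd i u R"] ne
        by auto
    qed
  qed
  also have "\<dots> \<longleftrightarrow> index_independent U (Pf c u mu) \<and> closed_family U (Pf c u mu)
      \<and> u_equation c u mu U"
    using closed_family_iff_symmetric[OF \<open>open U\<close>, of "Pf c u mu"] by blast
  finally show ?thesis .
qed

lemma Pf_eq: "Pf c u mu i j R = pd j (mu i) R - (mu j R - mu i R)\<^sup>2 / (c j (R$j) - c i (R$i)) * pd j u R"
  by (simp add: Pf_def power2_diff_divide_swap[of "mu i R" "mu j R" "c i (R$i)" "c j (R$j)"])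

lemma smooth_on_Pf:
  assumes "open U" "i \<noteq> j"
    and "smooth_on U (\<lambda>R. c i (R$i))" "smooth_on U (\<lambda>R. c j (R$j))"
    and "\<And>R. R \<in> U \<Longrightarrow> c i (R$i) \<noteq> c j (R$j)"
    and "smooth_on U u" "smooth_on U (mu i)" "smooth_on U (mu j)"
  shows "smooth_on U (Pf c u mu i j)"
proof -
  have "smooth_on U (\<lambda>R. c i (R$i) - c j (R$j))"
    by (rule smooth_on_diff) (use assms in auto)
  then have inv: "smooth_on U (\<lambda>R. inverse (c i (R$i) - c j (R$j)))"
    by (rule smooth_on_inverse[OF assms(1)]) (use assms(5) in auto)
  have "smooth_on U (\<lambda>R. mu i R - mu j R)"
    by (rule smooth_on_diff) (use assms in auto)
  then have "smooth_on U (\<lambda>R. (mu i R - mu j R) * (mu i R - mu j R) * inverse (c i (R$i) - c j (R$j)))"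
    by (intro smooth_on_mult[OF assms(1)] inv)
  then have "smooth_on U (\<lambda>R. pd j (mu i) R
      + (mu i R - mu j R) * (mu i R - mu j R) * inverse (c i (R$i) - c j (R$j)) * pd j u R)"
    by (rule smooth_on_add[OF assms(1) smooth_on_pd[OF assms(7)]
          smooth_on_mult[OF assms(1) _ smooth_on_pd[OF assms(6)]]])
  then show ?thesis
    unfolding Pf_def power2_eq_square divide_inverse .
qed

definition potential_system ::
  "('n::finite \<Rightarrow> real \<Rightarrow> real) \<Rightarrow> (real^'n \<Rightarrow> real) \<Rightarrow> ('n \<Rightarrow> real^'n \<Rightarrow> real) \<Rightarrow> (real^'n) set
    \<Rightarrow> (real^'n \<Rightarrow> real) \<Rightarrow> bool"
where
  "potential_system c u mu V P \<longleftrightarrow> (\<forall>R\<in>V. \<forall>i j. i \<noteq> j \<longrightarrow>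
     pd j (mu i) R = (mu j R - mu i R)\<^sup>2 / (c j (R$j) - c i (R$i)) * pd j u R + pd j P R
   \<and> pd i (pd j u) R = 2 * (mu j R - mu i R) / (c j (R$j) - c i (R$i)) * pd i u R * pd j u R)"

definition reduced_system ::
  "('n::finite \<Rightarrow> real \<Rightarrow> real) \<Rightarrow> (real^'n \<Rightarrow> real) \<Rightarrow> ('n \<Rightarrow> real^'n \<Rightarrow> real) \<Rightarrow> (real^'n) set \<Rightarrow> bool"
where
  "reduced_system c u mu V \<longleftrightarrow> (\<forall>R\<in>V. \<forall>i j. i \<noteq> j \<longrightarrow>
     pd j (mu i) R = (mu j R - mu i R)\<^sup>2 / (c j (R$j) - c i (R$i)) * pd j u R
   \<and> pd i (pd j u) R = 2 * (mu j R - mu i R) / (c j (R$j) - c i (R$i)) * pd i u R * pd j u R)"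

lemma potential_system_iff:
  "(\<forall>R\<in>V. P differentiable (at R)) \<and> potential_system c u mu V P
    \<longleftrightarrow> is_potential V P (Pf c u mu) \<and> u_equation c u mu V"
  unfolding potential_system_def is_potential_def u_equation_def Pf_eq by auto

lemma potential_system_iff_reduced_system:
  assumes "\<And>R. R \<in> V \<Longrightarrow> P differentiable (at R)"
    and "\<And>i R. R \<in> V \<Longrightarrow> mu i differentiable (at R)"
  shows "potential_system c u mu V P \<longleftrightarrow> reduced_system c u (\<lambda>i x. mu i x - P x) V"
  using assms unfolding potential_system_def reduced_system_def by (simp add: pd_diff diff_eq_eq)

lemma multiform_EL_Lag_on_iff_local_potential:
  fixes c :: "'n::finite \<Rightarrow> real \<Rightarrow> real"
  assumes n3: "3 \<le> CARD('n)" and "open U"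
    and dPf: "\<And>i j R. i \<noteq> j \<Longrightarrow> R \<in> U \<Longrightarrow> Pf c u mu i j differentiable (at R)"
    and cPf: "\<And>i j k. i \<noteq> j \<Longrightarrow> continuous_on U (pd k (Pf c u mu i j))"
    and du: "\<And>i R. R \<in> U \<Longrightarrow> pd i u differentiable (at R)"
  shows "(\<forall>R\<in>U. multiform_EL (Lag c) (flds u mu) R) \<longleftrightarrow>
    (\<forall>R0\<in>U. \<exists>V P. open V \<and> R0 \<in> V \<and> V \<subseteq> U \<and> (\<forall>R\<in>V. P differentiable (at R))
      \<and> potential_system c u mu V P)"
proof -
  have "(\<forall>R\<in>U. multiform_EL (Lag c) (flds u mu) R) \<longleftrightarrow>
      (index_independent U (Pf c u mu) \<and> closed_family U (Pf c u mu)) \<and> u_equation c u mu U"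
    using multiform_EL_Lag_on_iff[OF n3 \<open>open U\<close> dPf du] by blast
  also have "\<dots> \<longleftrightarrow> (\<forall>R0\<in>U. \<exists>V P. open V \<and> R0 \<in> V \<and> V \<subseteq> U \<and> is_potential V P (Pf c u mu))
      \<and> u_equation c u mu U"
    using n3 by (simp add: closed_family_iff_local_potential[OF _ \<open>open U\<close> dPf cPf])
  also have "\<dots> \<longleftrightarrow> (\<forall>R0\<in>U. \<exists>V P. open V \<and> R0 \<in> V \<and> V \<subseteq> U
      \<and> is_potential V P (Pf c u mu) \<and> u_equation c u mu V)"
  proof
    assume "(\<forall>R0\<in>U. \<exists>V P. open V \<and> R0 \<in> V \<and> V \<subseteq> U \<and> is_potential V P (Pf c u mu))
      \<and> u_equation c u mu U"
    then show "\<forall>R0\<in>U. \<exists>V P. open V \<and> R0 \<in> V \<and> V \<subseteq> U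
      \<and> is_potential V P (Pf c u mu) \<and> u_equation c u mu V"
      unfolding u_equation_def by (meson subsetD)
  next
    assume local: "\<forall>R0\<in>U. \<exists>V P. open V \<and> R0 \<in> V \<and> V \<subseteq> U
      \<and> is_potential V P (Pf c u mu) \<and> u_equation c u mu V"
    have "u_equation c u mu U"
      unfolding u_equation_def
    proof
      fix R assume "R \<in> U"
      then obtain V P where "R \<in> V" "u_equation c u mu V"
        using local by blast
      then show "\<forall>i j. i \<noteq> j \<longrightarrow>
          pd i (pd j u) R = 2 * (mu j R - mu i R) / (c j (R$j) - c i (R$i)) * pd i u R * pd j u R"
        unfolding u_equation_def by blast
    qed
    with local show "(\<forall>R0\<in>U. \<exists>V P. open V \<and> R0 \<in> V \<and> V \<subseteq> U \<and> is_potential V P (Pf c u mu))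
      \<and> u_equation c u mu U"
      by blast
  qed
  finally show ?thesis
    by (simp only: potential_system_iff)
qed

theorem mainTheorem10:
  fixes c :: "'n::finite \<Rightarrow> real \<Rightarrow> real"
    and u :: "real^'n \<Rightarrow> real"
    and mu :: "'n \<Rightarrow> real^'n \<Rightarrow> real"
    and U :: "(real^'n) set"
  assumes n3: "CARD('n) \<ge> 3"
    and U_open: "open U"
    and c_smooth: "\<And>i. smooth_on U (\<lambda>R. c i (R$i))"
    and c_distinct: "\<And>i j R. i \<noteq> j \<Longrightarrow> R \<in> U \<Longrightarrow> c i (R$i) \<noteq> c j (R$j)"
    and u_smooth: "smooth_on U u"
    and mu_smooth: "\<And>i. smooth_on U (mu i)"
  shows
    "((\<forall>R\<in>U. multiform_EL (Lag c) (flds u mu) R)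
      \<longleftrightarrow>
       ((\<forall>R\<in>U. \<forall>i k j. i \<noteq> j \<and> k \<noteq> j \<longrightarrow> Pf c u mu i j R = Pf c u mu k j R)
      \<and> (\<forall>R\<in>U. \<forall>i j k l. i \<noteq> j \<and> k \<noteq> i \<and> l \<noteq> j \<longrightarrow>
             pd j (Pf c u mu k i) R = pd i (Pf c u mu l j) R)
      \<and> (\<forall>R\<in>U. \<forall>i j. i \<noteq> j \<longrightarrow>
             pd i (pd j u) R = 2 * (mu j R - mu i R) / (c j (R$j) - c i (R$i)) * pd i u R * pd j u R)))
   \<and> ((\<forall>R\<in>U. multiform_EL (Lag c) (flds u mu) R)
      \<longleftrightarrow>
       (\<forall>R0\<in>U. \<exists>V P. open V \<and> R0 \<in> V \<and> V \<subseteq> U \<and> (\<forall>R\<in>V. P differentiable (at R)) \<and>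
          (\<forall>R\<in>V. \<forall>i j. i \<noteq> j \<longrightarrow>
             pd j (mu i) R = (mu j R - mu i R)^2 / (c j (R$j) - c i (R$i)) * pd j u R + pd j P R
           \<and> pd i (pd j u) R = 2 * (mu j R - mu i R) / (c j (R$j) - c i (R$i)) * pd i u R * pd j u R)))
   \<and> (\<forall>V P. open V \<longrightarrow> V \<subseteq> U \<longrightarrow> (\<forall>R\<in>V. P differentiable (at R)) \<longrightarrow>
       ((\<forall>R\<in>V. \<forall>i j. i \<noteq> j \<longrightarrow>
             pd j (mu i) R = (mu j R - mu i R)^2 / (c j (R$j) - c i (R$i)) * pd j u R + pd j P R
           \<and> pd i (pd j u) R = 2 * (mu j R - mu i R) / (c j (R$j) - c i (R$i)) * pd i u R * pd j u R)
        \<longleftrightarrow>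
        (\<forall>R\<in>V. \<forall>i j. i \<noteq> j \<longrightarrow>
             pd j (\<lambda>x. mu i x - P x) R
               = ((mu j R - P R) - (mu i R - P R))^2 / (c j (R$j) - c i (R$i)) * pd j u R
           \<and> pd i (pd j u) R
               = 2 * ((mu j R - P R) - (mu i R - P R)) / (c j (R$j) - c i (R$i)) * pd i u R * pd j u R)))"
proof -
  have Pf_smooth: "smooth_on U (Pf c u mu i j)" if "i \<noteq> j" for i j
    using smooth_on_Pf[OF U_open that c_smooth c_smooth c_distinct[OF that] u_smooth mu_smooth mu_smooth] .
  have dPf: "Pf c u mu i j differentiable (at R)" if "i \<noteq> j" "R \<in> U" for i j R
    using smooth_on_imp_differentiable[OF Pf_smooth] that .
  have cPf: "continuous_on U (pd k (Pf c u mu i j))" if "i \<noteq> j" for i j k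
    using smooth_on_imp_continuous_pd[OF Pf_smooth[OF that]] continuous_at_imp_continuous_on by blast
  have du: "pd i u differentiable (at R)" if "R \<in> U" for i R
    using smooth_on_imp_differentiable[OF smooth_on_pd[OF u_smooth] that] .
  have shift: "potential_system c u mu V P \<longleftrightarrow> reduced_system c u (\<lambda>i x. mu i x - P x) V"
    if "V \<subseteq> U" "\<forall>R\<in>V. P differentiable (at R)" for V P
    by (rule potential_system_iff_reduced_system)
      (use that mu_smooth in \<open>auto intro: smooth_on_imp_differentiable\<close>)
  show ?thesis
    using multiform_EL_Lag_on_iff[OF n3 U_open dPf du]
      multiform_EL_Lag_on_iff_local_potential[OF n3 U_open dPf cPf du]
    unfolding index_independent_def closed_family_def u_equation_def potential_system_def
    by (intro conjI allI impI)
      (assumption | rule shift[unfolded potential_system_def reduced_system_def])+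
qed

end
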